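(* Let $a\in\mathbb F^*$. For all $u\in\mathbb F^n$ and $f\in\mathcal R$ we have $\mathfrak p_a\big(u\,M^\theta_a(\overline f)\big)=\mathfrak p_a(u)\,\overline f$. Consequently, $\mathrm{im}\,M^\theta_a(\overline f)=\mathfrak v_a(\mathcal R\overline f)$, where $\mathcal R\overline f$ is the left $\mathcal R$-submodule of $\mathcal S_a$ generated by $\overline f$.
   Context: $\mathbb F$ is a finite field, $\theta\in\mathrm{Aut}(\mathbb F)$, $\mathcal R=\mathbb F[x;\theta]$ the skew polynomial ring (elements $\sum f_ix^i$ with left coefficients, $xb=\theta(b)x$). Fix $n\in\mathbb N$. $\mathcal S_a=\mathcal R/\mathcal R(x^n-a)$ is a left $\mathcal R$-module, $\overline f$ the coset of $f$; the product $\mathfrak p_a(u)\overline f$ means $\overline{pf}$ for any representative $p$ of $\mathfrak p_a(u)$. $\mathfrak p_a:\mathbb F^n\to\mathcal S_a$, $(c_0,\dots,c_{n-1})\mapsto\overline{\sum_{i=0}^{n-1}c_ix^i}$, $\mathfrak v_a=\mathfrak p_a^{-1}$. $M^\theta_a(\overline f)$ is the $n\times n$ matrix whose row with index $i$ ($0\le i\le n-1$) is $\mathfrak v_a(\overline{x^if})$; $\mathrm{im}$ denotes row space. *)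

theory Defs
  imports "HOL-Computational_Algebra.Polynomial" "Jordan_Normal_Form.Matrix"
begin

definition is_field_aut :: "('a::field \<Rightarrow> 'a) \<Rightarrow> bool" where
  "is_field_aut \<theta> \<longleftrightarrow> bij \<theta> \<and> (\<forall>x y. \<theta> (x + y) = \<theta> x + \<theta> y) \<and> (\<forall>x y. \<theta> (x * y) = \<theta> x * \<theta> y)"

text \<open>Skew polynomial ring F[x;theta]: elements are represented by their (left) coefficient
  sequences (type 'a poly); the multiplication is the skew one, x b = theta(b) x, i.e.
  (f_i x^i)(g_j x^j) = f_i theta^i(g_j) x^(i+j).\<close>
definition skew_mult :: "('a::field \<Rightarrow> 'a) \<Rightarrow> 'a poly \<Rightarrow> 'a poly \<Rightarrow> 'a poly" where
  "skew_mult \<theta> f g =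
     (\<Sum>i\<le>degree f. \<Sum>j\<le>degree g. monom (coeff f i * (\<theta> ^^ i) (coeff g j)) (i + j))"

text \<open>Equality of cosets in S_a = R / R(x^n - a):  f-bar = g-bar.\<close>
definition skew_cong :: "('a::field \<Rightarrow> 'a) \<Rightarrow> nat \<Rightarrow> 'a \<Rightarrow> 'a poly \<Rightarrow> 'a poly \<Rightarrow> bool" where
  "skew_cong \<theta> n a f g \<longleftrightarrow> (\<exists>q. f - g = skew_mult \<theta> q (monom 1 n - [:a:]))"

text \<open>The representative sum_i c_i x^i of p_a(c); p_a(c) is its coset.\<close>
definition pvec :: "'a::field vec \<Rightarrow> 'a poly" where
  "pvec c = (\<Sum>i<dim_vec c. monom (c $ i) i)"

definition vmap :: "('a::field \<Rightarrow> 'a) \<Rightarrow> nat \<Rightarrow> 'a \<Rightarrow> 'a poly \<Rightarrow> 'a vec" where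
  "vmap \<theta> n a g = (THE c. c \<in> carrier_vec n \<and> skew_cong \<theta> n a (pvec c) g)"

definition Mmat :: "('a::field \<Rightarrow> 'a) \<Rightarrow> nat \<Rightarrow> 'a \<Rightarrow> 'a poly \<Rightarrow> 'a mat" where
  "Mmat \<theta> n a f = mat n n (\<lambda>(i, j). vmap \<theta> n a (skew_mult \<theta> (monom 1 i) f) $ j)"

end

theory Submission
  imports Defs "Berlekamp_Zassenhaus.Berlekamp_Type_Based"
begin

text \<open>Combining the rows \<open>x^i f\<close> of \<open>M\<close> with coefficients \<open>u_i\<close> gives \<open>(\<Sum> u_i x^i) f\<close> modulo
  \<open>x^n - a\<close>, since \<open>x^n - a\<close> generates a left ideal; this is the first claim, and it shows that
  the row space lies in \<open>v_a(R f)\<close>. Conversely, \<open>S_a\<close> has only \<open>|F|^n\<close> elements, so two of the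
  \<open>|F|^(n+1)\<close> products \<open>h f\<close> with \<open>deg h \<le> n\<close> agree modulo \<open>x^n - a\<close>: some nonzero \<open>h\<close> of
  degree at most \<open>n\<close> annihilates \<open>f\<close>. Right division \<open>g = q h + r\<close> then gives \<open>g f \<equiv> r f\<close>
  with \<open>deg r < n\<close>, so \<open>v_a(g f)\<close> is a row combination.\<close>

lemma field_hom_funpow:
  fixes \<theta> :: "'a::field \<Rightarrow> 'a"
  assumes "field_hom \<theta>"
  shows "field_hom (\<theta> ^^ i)"
proof (induction i)
  case 0
  show ?case by unfold_locales simp_all
next
  case (Suc i)
  interpret \<theta>: field_hom \<theta> by (fact assms)
  interpret \<theta>i: field_hom "\<theta> ^^ i" by (fact Suc)
  show ?case by unfold_locales (simp_all add: \<theta>.hom_add \<theta>.hom_mult \<theta>i.hom_add \<theta>i.hom_mult)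
qed

lemma field_hom_if_is_field_aut:
  assumes "is_field_aut \<theta>"
  shows "field_hom \<theta>"
proof -
  have add: "\<theta> (x + y) = \<theta> x + \<theta> y" and mult: "\<theta> (x * y) = \<theta> x * \<theta> y" for x y
    using assms unfolding is_field_aut_def by blast+
  have inj: "inj \<theta>"
    using assms unfolding is_field_aut_def bij_def by blast
  have zero: "\<theta> 0 = 0"
    using add[of 0 0] by (metis add_cancel_right_right)
  have "\<theta> 1 * \<theta> 1 = \<theta> 1 * 1"
    using mult[of 1 1] by simp
  moreover have "\<theta> 1 \<noteq> 0"
    using inj zero by (metis injD one_neq_zero)
  ultimately have one: "\<theta> 1 = 1"
    by simp
  show ?thesis
    by unfold_locales (simp_all add: add mult zero one)
qed

subsection \<open>Coefficient vectors\<close>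

lemma coeff_pvec: "coeff (pvec c) k = (if k < dim_vec c then c $ k else 0)"
  unfolding pvec_def by (simp add: coeff_sum)

lemma pvec_vec_coeff: "degree r < n \<Longrightarrow> pvec (vec n (coeff r)) = r"
  by (rule poly_eqI) (auto simp: coeff_pvec coeff_eq_0)

lemma degree_pvec_less: "0 < dim_vec c \<Longrightarrow> degree (pvec c) < dim_vec c"
  by (rule degree_lessI) (auto simp: coeff_pvec)

lemma pvec_inject: "dim_vec c = dim_vec d \<Longrightarrow> pvec c = pvec d \<longleftrightarrow> c = d"
  by (metis coeff_pvec eq_vecI)

lemma pvec_lincomb:
  assumes "\<And>i. i \<in> I \<Longrightarrow> dim_vec (c i) = n"
  shows "pvec (vec n (\<lambda>j. \<Sum>i\<in>I. u i * c i $ j)) = (\<Sum>i\<in>I. Polynomial.smult (u i) (pvec (c i)))"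
  by (rule poly_eqI) (auto simp: coeff_pvec coeff_sum assms intro!: sum.cong)


subsection \<open>The skew polynomial ring\<close>

locale skew_poly_ring = field_hom \<theta> for \<theta> :: "'a::field \<Rightarrow> 'a"
begin

abbreviation skew_times :: "'a poly \<Rightarrow> 'a poly \<Rightarrow> 'a poly" (infixl \<open>\<star>\<close> 70)
  where "f \<star> g \<equiv> skew_mult \<theta> f g"

sublocale funpow: field_hom "\<theta> ^^ i" for i
  by (rule field_hom_funpow) unfold_locales

lemma coeff_skew_mult:
  "coeff (f \<star> g) k = (\<Sum>i\<le>k. coeff f i * (\<theta> ^^ i) (coeff g (k - i)))"
proof -
  define X where "X i j = coeff f i * (\<theta> ^^ i) (coeff g j)" for i j
  have X_0: "X i j = 0" if "degree f < i \<or> degree g < j" for i j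
    using that by (auto simp: X_def coeff_eq_0)
  have inner: "(\<Sum>j\<le>degree g. if i + j = k then X i j else 0) = (if i \<le> k then X i (k - i) else 0)"
    for i
  proof (cases "i \<le> k")
    case True
    have "(\<Sum>j\<le>degree g. if i + j = k then X i j else 0) = (\<Sum>j\<le>degree g. if k - i = j then X i j else 0)"
      using True by (intro sum.cong) auto
    then show ?thesis
      using True X_0[of i "k - i"] by auto
  qed auto
  have "coeff (f \<star> g) k = (\<Sum>i\<le>degree f. \<Sum>j\<le>degree g. if i + j = k then X i j else 0)"
    unfolding skew_mult_def X_def by (simp add: coeff_sum)
  also have "\<dots> = (\<Sum>i\<le>degree f. if i \<le> k then X i (k - i) else 0)"
    by (simp only: inner)
  also have "\<dots> = (\<Sum>i\<le>max (degree f) k. if i \<le> k then X i (k - i) else 0)"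
    by (rule sum.mono_neutral_left) (auto simp: X_0)
  also have "\<dots> = (\<Sum>i\<le>k. X i (k - i))"
    by (rule sum.mono_neutral_cong_right) auto
  finally show ?thesis
    unfolding X_def .
qed

lemma skew_mult_add_left: "(f + g) \<star> h = f \<star> h + g \<star> h"
  by (rule poly_eqI) (simp add: coeff_skew_mult distrib_right sum.distrib)

lemma skew_mult_add_right: "f \<star> (g + h) = f \<star> g + f \<star> h"
  by (rule poly_eqI) (simp add: coeff_skew_mult funpow.hom_add distrib_left sum.distrib)

lemma skew_mult_smult_left: "Polynomial.smult c f \<star> g = Polynomial.smult c (f \<star> g)"
  by (rule poly_eqI) (simp add: coeff_skew_mult sum_distrib_left mult.assoc)

lemma skew_mult_0_left [simp]: "0 \<star> g = 0"
  by (rule poly_eqI) (simp add: coeff_skew_mult)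

lemma skew_mult_diff_left: "(f - g) \<star> h = f \<star> h - g \<star> h"
  by (metis add_diff_cancel skew_mult_add_left diff_add_cancel)

lemma skew_mult_diff_right: "f \<star> (g - h) = f \<star> g - f \<star> h"
  by (metis add_diff_cancel skew_mult_add_right diff_add_cancel)

lemma skew_mult_minus_left: "(- f) \<star> g = - (f \<star> g)"
  using skew_mult_diff_left[of 0 f g] by simp

lemma skew_mult_sum_left: "(\<Sum>i\<in>A. F i) \<star> h = (\<Sum>i\<in>A. F i \<star> h)"
  by (induction A rule: infinite_finite_induct) (auto simp: skew_mult_add_left)

lemma coeff_monom_skew_mult:
  "coeff (monom c l \<star> g) k = (if l \<le> k then c * (\<theta> ^^ l) (coeff g (k - l)) else 0)"
proof -
  have "coeff (monom c l \<star> g) k = (\<Sum>i\<le>k. if l = i then c * (\<theta> ^^ i) (coeff g (k - i)) else 0)"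
    unfolding coeff_skew_mult by (rule sum.cong) auto
  then show ?thesis
    by simp
qed

lemma monom_skew_mult_assoc: "(monom c l \<star> g) \<star> h = monom c l \<star> (g \<star> h)"
proof (rule poly_eqI)
  fix k
  show "coeff ((monom c l \<star> g) \<star> h) k = coeff (monom c l \<star> (g \<star> h)) k"
  proof (cases "l \<le> k")
    case False
    then show ?thesis
      by (auto simp: coeff_skew_mult coeff_monom_skew_mult intro!: sum.neutral)
  next
    case True
    define G where "G i = c * (\<theta> ^^ l) (coeff g (i - l)) * (\<theta> ^^ i) (coeff h (k - i))" for i
    have "coeff ((monom c l \<star> g) \<star> h) k = (\<Sum>i\<le>k. if l \<le> i then G i else 0)"
      unfolding coeff_skew_mult[of "monom c l \<star> g"] coeff_monom_skew_mult G_def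
      by (rule sum.cong) auto
    also have "\<dots> = (\<Sum>i\<in>{l..k}. G i)"
      by (rule sum.mono_neutral_cong_right) auto
    also have "\<dots> = (\<Sum>j\<in>{0..k - l}. G (j + l))"
      using sum.shift_bounds_cl_nat_ivl[of G 0 l "k - l"] True by simp
    also have "\<dots> = (\<Sum>j\<le>k - l. c * ((\<theta> ^^ l) (coeff g j) * (\<theta> ^^ (l + j)) (coeff h (k - l - j))))"
      by (rule sum.cong) (auto simp: G_def add.commute diff_diff_left mult.assoc atLeast0AtMost)
    also have "\<dots> = coeff (monom c l \<star> (g \<star> h)) k"
      using True
      by (simp add: coeff_monom_skew_mult coeff_skew_mult[of g h] funpow.hom_sum funpow.hom_mult
          funpow_add sum_distrib_left)
    finally show ?thesis .
  qed
qed

lemma skew_mult_assoc: "(f \<star> g) \<star> h = f \<star> (g \<star> h)"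
proof -
  have "(f \<star> g) \<star> h = (\<Sum>i\<le>degree f. (monom (coeff f i) i \<star> g) \<star> h)"
    by (subst (1) poly_as_sum_of_monoms[symmetric]) (simp add: skew_mult_sum_left)
  also have "\<dots> = (\<Sum>i\<le>degree f. monom (coeff f i) i \<star> (g \<star> h))"
    by (simp add: monom_skew_mult_assoc)
  also have "\<dots> = f \<star> (g \<star> h)"
    by (subst (3) poly_as_sum_of_monoms[symmetric]) (simp add: skew_mult_sum_left)
  finally show ?thesis .
qed


lemma skew_mult_0_right [simp]: "f \<star> 0 = 0"
  by (rule poly_eqI) (simp add: coeff_skew_mult)

lemma coeff_skew_mult_above_degree:
  assumes "degree f + degree g < k"
  shows "coeff (f \<star> g) k = 0"
  unfolding coeff_skew_mult
proof (intro sum.neutral ballI)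
  fix i
  assume "i \<in> {..k}"
  then have "degree f < i \<or> degree g < k - i"
    using assms by auto
  then show "coeff f i * (\<theta> ^^ i) (coeff g (k - i)) = 0"
    by (auto simp: coeff_eq_0)
qed

lemma coeff_skew_mult_degree:
  "coeff (f \<star> g) (degree f + degree g) = lead_coeff f * (\<theta> ^^ degree f) (lead_coeff g)"
proof -
  define G where "G i = coeff f i * (\<theta> ^^ i) (coeff g (degree f + degree g - i))" for i
  have "G i = 0" if "i \<noteq> degree f" for i
    using that by (cases "i < degree f") (auto simp: G_def coeff_eq_0)
  then have "coeff (f \<star> g) (degree f + degree g) = G (degree f)"
    unfolding coeff_skew_mult G_def[symmetric] by (subst sum.remove[of _ "degree f"]) auto
  then show ?thesis
    by (simp add: G_def)
qed

lemma degree_skew_mult: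
  assumes "f \<noteq> 0" and "g \<noteq> 0"
  shows "degree (f \<star> g) = degree f + degree g"
proof (rule antisym)
  show "degree (f \<star> g) \<le> degree f + degree g"
    by (rule degree_le) (simp add: coeff_skew_mult_above_degree)
  show "degree f + degree g \<le> degree (f \<star> g)"
    by (rule le_degree) (simp add: coeff_skew_mult_degree assms)
qed

lemma skew_right_division:
  assumes "h \<noteq> 0"
  shows "\<exists>q r. g = q \<star> h + r \<and> (r = 0 \<or> degree r < degree h)"
proof (induction "degree g" arbitrary: g rule: less_induct)
  case less
  show ?case
  proof (cases "g = 0 \<or> degree g < degree h")
    case True
    then show ?thesis
      by (intro exI[of _ 0] exI[of _ g]) simp
  next
    case False
    define d where "d = degree g - degree h"
    define t where "t = monom (lead_coeff g / (\<theta> ^^ d) (lead_coeff h)) d"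
    have "coeff (g - t \<star> h) k = 0" if "degree g \<le> k" for k
    proof (cases "k = degree g")
      case True
      then show ?thesis
        using False assms by (simp add: t_def d_def coeff_monom_skew_mult)
    next
      case False
      then have "degree g < k" and "degree h < k - d"
        using that \<open>\<not> (g = 0 \<or> degree g < degree h)\<close> by (auto simp: d_def)
      then show ?thesis
        by (simp add: t_def coeff_monom_skew_mult coeff_eq_0)
    qed
    then have "g - t \<star> h = 0 \<or> degree (g - t \<star> h) < degree g"
      using degree_lessI by blast
    then obtain q r where "g - t \<star> h = q \<star> h + r" and r: "r = 0 \<or> degree r < degree h"
      using less by (metis add.right_neutral skew_mult_0_left)
    then have "g = (q + t) \<star> h + r"
      by (simp add: skew_mult_add_left algebra_simps)
    with r show ?thesis
      by blast
  qed
qed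

subsection \<open>The quotient module \<open>\<S>\<^sub>a\<close>\<close>

lemma skew_cong_refl: "skew_cong \<theta> n a f f"
  unfolding skew_cong_def by (intro exI[of _ 0]) simp

lemma skew_cong_sym:
  assumes "skew_cong \<theta> n a f g"
  shows "skew_cong \<theta> n a g f"
proof -
  obtain q where "f - g = q \<star> (monom 1 n - [:a:])"
    using assms unfolding skew_cong_def by blast
  then have "g - f = (- q) \<star> (monom 1 n - [:a:])"
    by (metis minus_diff_eq skew_mult_minus_left)
  then show ?thesis
    unfolding skew_cong_def ..
qed

lemma skew_cong_add:
  assumes "skew_cong \<theta> n a f g" and "skew_cong \<theta> n a f' g'"
  shows "skew_cong \<theta> n a (f + f') (g + g')"
proof -
  obtain q q' where "f - g = q \<star> (monom 1 n - [:a:])" and "f' - g' = q' \<star> (monom 1 n - [:a:])"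
    using assms unfolding skew_cong_def by blast
  then have "(f + f') - (g + g') = (q + q') \<star> (monom 1 n - [:a:])"
    by (metis add_diff_add skew_mult_add_left)
  then show ?thesis
    unfolding skew_cong_def ..
qed

lemma skew_cong_trans: "skew_cong \<theta> n a f g \<Longrightarrow> skew_cong \<theta> n a g h \<Longrightarrow> skew_cong \<theta> n a f h"
  using skew_cong_add[of n a f g g h] unfolding skew_cong_def by simp

lemma skew_cong_smult:
  assumes "skew_cong \<theta> n a f g"
  shows "skew_cong \<theta> n a (Polynomial.smult c f) (Polynomial.smult c g)"
proof -
  obtain q where "f - g = q \<star> (monom 1 n - [:a:])"
    using assms unfolding skew_cong_def by blast
  then have "Polynomial.smult c f - Polynomial.smult c g = Polynomial.smult c q \<star> (monom 1 n - [:a:])"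
    by (metis smult_diff_right skew_mult_smult_left)
  then show ?thesis
    unfolding skew_cong_def ..
qed

lemma skew_cong_lincomb:
  "(\<And>i. i \<in> I \<Longrightarrow> skew_cong \<theta> n a (F i) (G i)) \<Longrightarrow>
    skew_cong \<theta> n a (\<Sum>i\<in>I. Polynomial.smult (c i) (F i)) (\<Sum>i\<in>I. Polynomial.smult (c i) (G i))"
  by (induction I rule: infinite_finite_induct) (auto intro: skew_cong_refl skew_cong_add skew_cong_smult)

lemma skew_cong_mult_left:
  assumes "skew_cong \<theta> n a f g"
  shows "skew_cong \<theta> n a (h \<star> f) (h \<star> g)"
proof -
  obtain q where "f - g = q \<star> (monom 1 n - [:a:])"
    using assms unfolding skew_cong_def by blast
  then have "h \<star> f - h \<star> g = (h \<star> q) \<star> (monom 1 n - [:a:])"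
    by (metis skew_mult_assoc skew_mult_diff_right)
  then show ?thesis
    unfolding skew_cong_def ..
qed

lemma degree_skew_modulus:
  assumes "0 < n"
  shows "degree (monom 1 n - [:c::'a:]) = n"
proof -
  have "degree (monom 1 n + [:- c:]) = n"
    using assms by (subst degree_add_eq_left) (simp_all add: degree_monom_eq)
  moreover have "monom 1 n - [:c:] = monom 1 n + [:- c:]"
    by (simp add: diff_conv_add_uminus)
  ultimately show ?thesis
    by (simp only:)
qed

lemma skew_modulus_nonzero: "0 < n \<Longrightarrow> monom 1 n - [:c::'a:] \<noteq> 0"
  by (metis degree_0 degree_skew_modulus less_irrefl)

lemma skew_cong_pvec_inject:
  assumes "0 < n" and "c \<in> carrier_vec n" and "d \<in> carrier_vec n"
    and "skew_cong \<theta> n a (pvec c) (pvec d)"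
  shows "c = d"
proof -
  obtain q where q: "pvec c - pvec d = q \<star> (monom 1 n - [:a:])"
    using assms(4) unfolding skew_cong_def by blast
  have "degree (pvec c - pvec d) < n"
    using assms(1-3) degree_pvec_less[of c] degree_pvec_less[of d] by (intro degree_diff_less) auto
  then have "q = 0"
    using degree_skew_mult[OF _ skew_modulus_nonzero[OF assms(1), of a], of q]
    unfolding q degree_skew_modulus[OF assms(1)] by auto
  then show ?thesis
    using q assms(2,3) pvec_inject[of c d] by simp
qed

lemma skew_cong_pvec_exists:
  assumes "0 < n"
  shows "\<exists>c \<in> carrier_vec n. skew_cong \<theta> n a (pvec c) g"
proof -
  obtain q r where g: "g = q \<star> (monom 1 n - [:a:]) + r" and r: "r = 0 \<or> degree r < n"
    using skew_right_division[OF skew_modulus_nonzero[OF assms]]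
    unfolding degree_skew_modulus[OF assms] by blast
  have "degree r < n"
    using r assms by auto
  then have "pvec (vec n (coeff r)) = r"
    by (rule pvec_vec_coeff)
  moreover have "r - g = (- q) \<star> (monom 1 n - [:a:])"
    unfolding g by (simp add: skew_mult_minus_left)
  ultimately show ?thesis
    unfolding skew_cong_def by (metis vec_carrier)
qed

lemma ex1_pvec_skew_cong:
  assumes "0 < n"
  shows "\<exists>!c. c \<in> carrier_vec n \<and> skew_cong \<theta> n a (pvec c) g"
proof -
  obtain c where c: "c \<in> carrier_vec n" "skew_cong \<theta> n a (pvec c) g"
    using skew_cong_pvec_exists[OF assms] by blast
  have "d = c" if "d \<in> carrier_vec n" and "skew_cong \<theta> n a (pvec d) g" for d
    using skew_cong_pvec_inject[OF assms that(1) c(1)] skew_cong_trans[OF that(2) skew_cong_sym[OF c(2)]]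
    by blast
  with c show ?thesis
    by blast
qed

lemma
  assumes "0 < n"
  shows vmap_carrier: "vmap \<theta> n a g \<in> carrier_vec n"
    and skew_cong_pvec_vmap: "skew_cong \<theta> n a (pvec (vmap \<theta> n a g)) g"
  using theI'[OF ex1_pvec_skew_cong[OF assms]] unfolding vmap_def by blast+

lemma vmap_eqI:
  "0 < n \<Longrightarrow> c \<in> carrier_vec n \<Longrightarrow> skew_cong \<theta> n a (pvec c) g \<Longrightarrow> vmap \<theta> n a g = c"
  unfolding vmap_def by (rule the1_equality[OF ex1_pvec_skew_cong]) auto

lemma vmap_eq_iff:
  assumes "0 < n"
  shows "vmap \<theta> n a g = vmap \<theta> n a h \<longleftrightarrow> skew_cong \<theta> n a g h"
proof
  assume "vmap \<theta> n a g = vmap \<theta> n a h"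
  then show "skew_cong \<theta> n a g h"
    using skew_cong_pvec_vmap[OF assms, of a g] skew_cong_pvec_vmap[OF assms, of a h]
    by (metis skew_cong_sym skew_cong_trans)
next
  assume "skew_cong \<theta> n a g h"
  then show "vmap \<theta> n a g = vmap \<theta> n a h"
    using vmap_carrier[OF assms, of a h] skew_cong_pvec_vmap[OF assms, of a h]
    by (metis skew_cong_sym skew_cong_trans vmap_eqI[OF assms])
qed

lemma skew_cong_pvec_Mmat_mult_vec:
  assumes "0 < n" and "u \<in> carrier_vec n"
  shows "skew_cong \<theta> n a (pvec ((Mmat \<theta> n a f)\<^sup>T *\<^sub>v u)) (pvec u \<star> f)"
proof -
  define V where "V i = vmap \<theta> n a (monom 1 i \<star> f)" for i
  have "(Mmat \<theta> n a f)\<^sup>T *\<^sub>v u = vec n (\<lambda>j. \<Sum>i<n. u $ i * V i $ j)"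
    using assms(2) by (intro eq_vecI) (auto simp: Mmat_def V_def scalar_prod_def atLeast0LessThan mult.commute)
  then have "pvec ((Mmat \<theta> n a f)\<^sup>T *\<^sub>v u) = (\<Sum>i<n. Polynomial.smult (u $ i) (pvec (V i)))"
    using vmap_carrier[OF assms(1)] by (simp add: pvec_lincomb V_def)
  moreover have "pvec u \<star> f = (\<Sum>i<n. Polynomial.smult (u $ i) (monom 1 i \<star> f))"
    using assms(2) by (auto simp: pvec_def skew_mult_sum_left skew_mult_smult_left[symmetric] smult_monom)
  ultimately show ?thesis
    using skew_cong_pvec_vmap[OF assms(1)] by (simp add: V_def skew_cong_lincomb)
qed

lemma Mmat_mult_vec_eq_vmap:
  assumes "0 < n" and "u \<in> carrier_vec n"
  shows "(Mmat \<theta> n a f)\<^sup>T *\<^sub>v u = vmap \<theta> n a (pvec u \<star> f)"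
proof -
  have "(Mmat \<theta> n a f)\<^sup>T *\<^sub>v u \<in> carrier_vec n"
    by (intro carrier_vecI) (simp add: Mmat_def)
  from vmap_eqI[OF assms(1) this skew_cong_pvec_Mmat_mult_vec[OF assms]] show ?thesis
    by simp
qed

end

lemma card_carrier_vec_less_Suc:
  "card (carrier_vec n :: 'a::{zero_neq_one,finite} vec set) < card (carrier_vec (Suc n) :: 'a vec set)"
proof -
  have "2 \<le> CARD('a)"
    using card_mono[of UNIV "{0::'a, 1}"] by simp
  then show ?thesis
    by (simp add: card_carrier_vec)
qed

locale finite_skew_poly_ring = skew_poly_ring \<theta> for \<theta> :: "'a::{field,finite} \<Rightarrow> 'a"
begin

lemma ex_left_annihilator:
  assumes "0 < n"
  shows "\<exists>h. h \<noteq> 0 \<and> degree h \<le> n \<and> skew_cong \<theta> n a (h \<star> f) 0"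
proof -
  define \<phi> where "\<phi> c = vmap \<theta> n a (pvec c \<star> f)" for c
  have "\<phi> ` carrier_vec (Suc n) \<subseteq> carrier_vec n"
    using vmap_carrier[OF assms] unfolding \<phi>_def by auto
  then have "\<not> inj_on \<phi> (carrier_vec (Suc n))"
    using card_carrier_vec_less_Suc[where 'a='a, of n] by (metis card_inj_on_le finite_carrier_vec not_le)
  then obtain c d where cd: "c \<in> carrier_vec (Suc n)" "d \<in> carrier_vec (Suc n)" "c \<noteq> d" "\<phi> c = \<phi> d"
    unfolding inj_on_def by blast
  have "skew_cong \<theta> n a (pvec c \<star> f) (pvec d \<star> f)"
    using cd(4) vmap_eq_iff[OF assms] unfolding \<phi>_def by blast
  then have "skew_cong \<theta> n a ((pvec c - pvec d) \<star> f) 0"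
    unfolding skew_cong_def by (simp add: skew_mult_diff_left)
  moreover have "pvec c - pvec d \<noteq> 0"
    using cd pvec_inject[of c d] by auto
  moreover have "degree (pvec c - pvec d) \<le> n"
    using cd(1,2) degree_pvec_less[of c] degree_pvec_less[of d] by (intro degree_diff_le) auto
  ultimately show ?thesis
    by blast
qed

lemma ex_pvec_skew_cong_mult:
  assumes "0 < n"
  shows "\<exists>u \<in> carrier_vec n. skew_cong \<theta> n a (pvec u \<star> f) (g \<star> f)"
proof -
  obtain h where h: "h \<noteq> 0" "degree h \<le> n" "skew_cong \<theta> n a (h \<star> f) 0"
    using ex_left_annihilator[OF assms] by blast
  obtain q r where g: "g = q \<star> h + r" and r: "r = 0 \<or> degree r < degree h"
    using skew_right_division[OF h(1)] by blast
  have "degree r < n"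
    using r h(2) assms by auto
  then have "pvec (vec n (coeff r)) = r"
    by (rule pvec_vec_coeff)
  moreover have "skew_cong \<theta> n a (q \<star> (h \<star> f) + r \<star> f) (0 + r \<star> f)"
    using skew_cong_mult_left[OF h(3), of q] skew_cong_refl by (intro skew_cong_add) simp_all
  then have "skew_cong \<theta> n a (r \<star> f) (g \<star> f)"
    unfolding g skew_mult_add_left skew_mult_assoc by (simp add: skew_cong_sym)
  ultimately show ?thesis
    using vec_carrier by metis
qed

lemma row_space_Mmat:
  assumes "0 < n"
  shows "{(Mmat \<theta> n a f)\<^sup>T *\<^sub>v u | u. u \<in> carrier_vec n} = {vmap \<theta> n a (g \<star> f) | g. True}"
proof (intro equalityI subsetI)
  fix v
  assume "v \<in> {(Mmat \<theta> n a f)\<^sup>T *\<^sub>v u | u. u \<in> carrier_vec n}"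
  then obtain u where "u \<in> carrier_vec n" and "v = (Mmat \<theta> n a f)\<^sup>T *\<^sub>v u"
    by blast
  then have "v = vmap \<theta> n a (pvec u \<star> f)"
    by (simp add: Mmat_mult_vec_eq_vmap[OF assms])
  then show "v \<in> {vmap \<theta> n a (g \<star> f) | g. True}"
    by blast
next
  fix v
  assume "v \<in> {vmap \<theta> n a (g \<star> f) | g. True}"
  then obtain g where v: "v = vmap \<theta> n a (g \<star> f)"
    by blast
  obtain u where u: "u \<in> carrier_vec n" and "skew_cong \<theta> n a (pvec u \<star> f) (g \<star> f)"
    using ex_pvec_skew_cong_mult[OF assms] by blast
  then have "v = (Mmat \<theta> n a f)\<^sup>T *\<^sub>v u"
    unfolding v Mmat_mult_vec_eq_vmap[OF assms u] by (simp add: vmap_eq_iff[OF assms] skew_cong_sym)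
  with u show "v \<in> {(Mmat \<theta> n a f)\<^sup>T *\<^sub>v u | u. u \<in> carrier_vec n}"
    by blast
qed

end

theorem proposition3p3:
  fixes \<theta> :: "'a::{field,finite} \<Rightarrow> 'a" and a :: 'a and n :: nat
  assumes "is_field_aut \<theta>" and "a \<noteq> 0" and "0 < n"
  shows "(\<forall>u \<in> carrier_vec n. \<forall>f.
            skew_cong \<theta> n a (pvec ((Mmat \<theta> n a f)\<^sup>T *\<^sub>v u)) (skew_mult \<theta> (pvec u) f))
       \<and> (\<forall>f. {(Mmat \<theta> n a f)\<^sup>T *\<^sub>v u | u. u \<in> carrier_vec n}
              = {vmap \<theta> n a (skew_mult \<theta> g f) | g. True})"
proof -
  interpret field_hom \<theta>
    by (fact field_hom_if_is_field_aut[OF assms(1)])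
  interpret finite_skew_poly_ring \<theta> ..
  show ?thesis
    using skew_cong_pvec_Mmat_mult_vec[OF assms(3)] row_space_Mmat[OF assms(3)] by simp
qed

end
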